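(* Let $p$ be an odd prime, $q=p^e$ with $e\ge 1$, and let $k$ be an integer with $1\le k\le e$. Then $F_{p^k}(1,x)$ is a permutation polynomial of $\mathbb{F}_q$ if and only if $\gcd\!\left(\frac{p^k-1}{2},\,q-1\right)=1$.
   Context: For an integer $n\ge 1$, the $n$-th reversed Dickson polynomial of the third kind is $F_n(a,x)=\sum_{i=0}^{\lfloor n/2\rfloor}\frac{n-2i}{n-i}\binom{n-i}{i}(-x)^i a^{n-2i}$, where each coefficient $\frac{n-2i}{n-i}\binom{n-i}{i}$ is an integer (read in $\mathbb{F}_q$), and $F_0(a,x)=0$. A polynomial $f\in\mathbb{F}_q[x]$ is a permutation polynomial of $\mathbb{F}_q$ if $c\mapsto f(c)$ is a bijection of $\mathbb{F}_q$. *)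

theory Defs
  imports "HOL-Computational_Algebra.Computational_Algebra" "HOL-Library.Cardinality"
begin

text \<open>Integer coefficient (n-2i)/(n-i) * binom(n-i,i); the division is exact for 2i <= n, n >= 1.\<close>
definition rdick3_coeff :: "nat \<Rightarrow> nat \<Rightarrow> nat" where
  "rdick3_coeff n i = ((n - 2*i) * ((n - i) choose i)) div (n - i)"

definition rev_dickson3 :: "nat \<Rightarrow> 'a::comm_ring_1 \<Rightarrow> 'a poly" where
  "rev_dickson3 n a =
     (if n = 0 then 0
      else (\<Sum>i = 0..n div 2.
              smult (of_nat (rdick3_coeff n i) * a ^ (n - 2*i)) ([:0, -1:] ^ i)))"

definition permutation_polynomial :: "'a::{finite,comm_ring_1} poly \<Rightarrow> bool" where
  "permutation_polynomial f \<longleftrightarrow> bij (\<lambda>c. poly f c)"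

end

theory Submission
  imports Defs "HOL-Number_Theory.Residues"
begin

text \<open>
  Since (n-2i)/(n-i) C(n-i,i) = C(n-i-1,i), the reversed Dickson polynomial of the third kind
  is F_n(a,x) = a E_{n-1}(a,x), where E is the one of the second kind, and the recurrence of E
  gives (2y-a) E_{n-1}(a, y(a-y)) = y^n - (a-y)^n. If n = p^k with p the odd characteristic,
  the right-hand side equals (2y-a)^n by the Frobenius, so cancelling 2y-a leaves
  F_n(a,x) = a (a^2-4x)^m with m = (n-1)/2. Over F_q, where 4 is invertible, F_n(1,x) is thus
  an affine bijection followed by c \<mapsto> c^m, which permutes F_q iff gcd(m, q-1) = 1: one
  direction by Fermat and Bezout, the other because for a prime r dividing both, c \<mapsto> c^m
  sends a nontrivial r-th root of unity z^((q-1)/r) to 1.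
\<close>

(* Residues, imported for CHAR_dvd_CARD, brings along HOL-Algebra's homonyms of these constants. *)
hide_const (open) up_ring.coeff up_ring.monom module.smult

lemma rdick3_coeff_eq_choose:
  assumes "0 < n"
  shows "rdick3_coeff n j = (n - j - 1) choose j"
proof (cases "j < n")
  case True
  have "(n - 2*j) * ((n - j) choose j) = (n - j) * ((n - j - 1) choose j)"
    using binomial_absorb_comp[of "n - j" j] by (simp add: diff_diff_add mult_2)
  then show ?thesis
    using True by (simp add: rdick3_coeff_def)
next
  case False
  then show ?thesis
    using assms by (simp add: rdick3_coeff_def)
qed

fun rev_dickson2 :: "nat \<Rightarrow> 'a::comm_ring_1 \<Rightarrow> 'a poly" where
  "rev_dickson2 0 a = 1"
| "rev_dickson2 (Suc 0) a = [:a:]"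
| "rev_dickson2 (Suc (Suc n)) a = smult a (rev_dickson2 (Suc n) a) + [:0, -1:] * rev_dickson2 n a"

lemma coeff_rev_dickson2:
  "coeff (rev_dickson2 n a) j = (-1) ^ j * of_nat ((n - j) choose j) * a ^ (n - 2*j)"
proof (induction n a arbitrary: j rule: rev_dickson2.induct)
  case (3 n a)
  show ?case
  proof (cases j)
    case 0
    then show ?thesis using "3.IH"(1)[of 0] by simp
  next
    case (Suc i)
    have a_pow: "a * a ^ (n + 1 - 2 * j) * of_nat ((n + 1 - j) choose j)
        = a ^ (n - 2 * i) * of_nat ((n + 1 - j) choose j)"
    proof (cases "2 * j \<le> n + 1")
      case True
      then have "Suc (n + 1 - 2 * j) = n - 2 * i" using Suc by simp
      then show ?thesis by (simp flip: power_Suc)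
    next
      case False
      then show ?thesis by (simp add: binomial_eq_0)
    qed
    have pascal: "(n + 2 - j) choose j = ((n + 1 - j) choose j) + ((n - i) choose i)"
      using Suc by (cases "i \<le> n") (simp_all add: Suc_diff_le binomial_eq_0)
    have "coeff (rev_dickson2 (Suc (Suc n)) a) j
        = a * coeff (rev_dickson2 (Suc n) a) j - coeff (rev_dickson2 n a) i"
      using Suc by simp
    also have "\<dots> = (-1) ^ j * (a * a ^ (n + 1 - 2 * j) * of_nat ((n + 1 - j) choose j)
        + a ^ (n - 2 * i) * of_nat ((n - i) choose i))"
      using Suc "3.IH"(1)[of j] "3.IH"(2)[of i] by (simp add: algebra_simps)
    also have "\<dots> = (-1) ^ j * of_nat ((n + 2 - j) choose j) * a ^ (n + 2 - 2 * j)"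
      unfolding a_pow pascal using Suc by (simp add: algebra_simps)
    finally show ?thesis by simp
  qed
qed (auto simp: coeff_pCons binomial_eq_0 split: nat.split)

lemma coeff_rev_dickson3:
  assumes "0 < n"
  shows "coeff (rev_dickson3 n a) j = (-1) ^ j * of_nat ((n - j - 1) choose j) * a ^ (n - 2*j)"
proof -
  have "([:0, -1:] :: 'a poly) = monom (-1) 1"
    by (simp add: monom_Suc monom_0)
  then have "([:0, -1:] :: 'a poly) ^ i = monom ((-1) ^ i) i" for i
    by (simp add: monom_power)
  then have "coeff (rev_dickson3 n a) j
      = (if j \<le> n div 2 then (-1) ^ j * of_nat (rdick3_coeff n j) * a ^ (n - 2*j) else 0)"
    using assms by (simp add: rev_dickson3_def coeff_sum coeff_monom if_distrib mult.commute cong: if_cong)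
  moreover have "n - j - 1 < j" if "\<not> j \<le> n div 2"
    using that by linarith
  ultimately show ?thesis
    using assms by (cases "j \<le> n div 2") (simp_all add: rdick3_coeff_eq_choose binomial_eq_0)
qed

lemma rev_dickson3_eq_smult_rev_dickson2:
  assumes "0 < n"
  shows "rev_dickson3 n a = smult a (rev_dickson2 (n - 1) a)"
proof (rule poly_eqI)
  fix j
  have "a ^ (n - 2*j) * of_nat ((n - j - 1) choose j) = a * a ^ (n - 1 - 2*j) * of_nat ((n - j - 1) choose j)"
  proof (cases "2 * j < n")
    case True
    then have "n - 2*j = Suc (n - 1 - 2*j)" by simp
    then show ?thesis by simp
  next
    case False
    then have "n - j - 1 < j"
      using assms by linarith
    then show ?thesis by (simp add: binomial_eq_0)
  qed
  then show "coeff (rev_dickson3 n a) j = coeff (smult a (rev_dickson2 (n - 1) a)) j"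
    using assms by (simp add: coeff_rev_dickson3 coeff_rev_dickson2 algebra_simps)
qed

lemma pcompose_power: "pcompose (p ^ n) q = pcompose p q ^ n"
  by (induction n) (simp_all add: pcompose_mult pcompose_1)

lemma rev_dickson2_pcompose:
  fixes a :: "'a::comm_ring_1"
  defines "y \<equiv> [:0, 1:]" and "u \<equiv> [:a, -1:]"
  shows "(y - u) * pcompose (rev_dickson2 n a) (y * u) = y ^ Suc n - u ^ Suc n"
proof (induction n rule: induct_nat_012)
  case 0
  then show ?case by (simp add: pcompose_1)
next
  case 1
  have "y + u = [:a:]"
    unfolding y_def u_def by simp
  then have "(y - u) * pcompose (rev_dickson2 1 a) (y * u) = (y - u) * (y + u)"
    by simp
  then show ?case
    by (simp add: power2_eq_square algebra_simps)
next
  case (ge2 n)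
  have sum: "[:a:] = y + u"
    unfolding y_def u_def by simp
  have neg: "pcompose [:0, -1:] (y * u) = - (y * u)"
    by (simp add: pcompose_pCons)
  have rec: "pcompose (rev_dickson2 (Suc (Suc n)) a) (y * u)
      = [:a:] * pcompose (rev_dickson2 (Suc n) a) (y * u) - y * u * pcompose (rev_dickson2 n a) (y * u)"
    unfolding rev_dickson2.simps(3) pcompose_add pcompose_smult pcompose_mult neg by simp
  have "(y - u) * pcompose (rev_dickson2 (Suc (Suc n)) a) (y * u)
      = (y + u) * ((y - u) * pcompose (rev_dickson2 (Suc n) a) (y * u))
        - y * u * ((y - u) * pcompose (rev_dickson2 n a) (y * u))"
    unfolding rec sum by (simp add: algebra_simps del: rev_dickson2.simps)
  also have "\<dots> = (y + u) * (y ^ Suc (Suc n) - u ^ Suc (Suc n)) - y * u * (y ^ Suc n - u ^ Suc n)"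
    using ge2 by simp
  also have "\<dots> = y ^ Suc (Suc (Suc n)) - u ^ Suc (Suc (Suc n))"
    by (simp add: algebra_simps)
  finally show ?case .
qed

lemma freshmans_dream_diff:
  fixes x y :: "'a::comm_ring_1"
  assumes "prime CHAR('a)" and "odd CHAR('a)"
  shows "(x - y) ^ (CHAR('a) ^ k) = x ^ (CHAR('a) ^ k) - y ^ (CHAR('a) ^ k)"
proof -
  have "(x + (- y)) ^ (CHAR('a) ^ k) = x ^ (CHAR('a) ^ k) + (- y) ^ (CHAR('a) ^ k)"
    using assms(1) by (rule freshmans_dream') simp
  then show ?thesis
    using assms(2) by simp
qed

lemma two_neq_zero_odd_char:
  assumes "prime CHAR('a::comm_ring_1)" and "odd CHAR('a)"
  shows "(2::'a) \<noteq> 0"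
proof
  assume "(2::'a) = 0"
  then have "CHAR('a) dvd 2"
    by (metis of_nat_numeral of_nat_eq_0_iff_char_dvd)
  then have "CHAR('a) = 2"
    using assms(1) two_is_prime_nat primes_dvd_imp_eq by blast
  then show False
    using assms(2) by simp
qed

lemma rev_dickson3_char_power:
  fixes a :: "'a::idom"
  assumes "prime CHAR('a)" and "odd CHAR('a)"
  shows "rev_dickson3 (CHAR('a) ^ k) a = smult a ([:a^2, -4:] ^ ((CHAR('a) ^ k - 1) div 2))"
proof -
  define n where "n = CHAR('a) ^ k"
  define y u :: "'a poly" where "y = [:0, 1:]" and "u = [:a, -1:]"
  have "odd n" "0 < n"
    using assms by (simp_all add: n_def prime_gt_0_nat)
  have "(y - u) * pcompose (rev_dickson2 (n - 1) a) (y * u) = y ^ n - u ^ n"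
    using rev_dickson2_pcompose[of a "n - 1"] \<open>0 < n\<close> by (simp add: y_def u_def)
  also have "\<dots> = (y - u) ^ n"
    using freshmans_dream_diff[of y u k] assms by (simp add: n_def)
  also have "\<dots> = (y - u) * ((y - u) ^ 2) ^ ((n - 1) div 2)"
  proof -
    have "n = Suc (2 * ((n - 1) div 2))"
      using \<open>odd n\<close> by presburger
    then show ?thesis
      by (metis power_Suc power_mult)
  qed
  also have "(y - u) ^ 2 = pcompose [:a^2, -4:] (y * u)"
    by (simp add: y_def u_def power2_eq_square pcompose_pCons algebra_simps)
  finally have "(y - u) * pcompose (rev_dickson2 (n - 1) a) (y * u)
      = (y - u) * pcompose ([:a^2, -4:] ^ ((n - 1) div 2)) (y * u)"
    by (simp only: pcompose_power)
  moreover have "y - u \<noteq> 0"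
    using two_neq_zero_odd_char[OF assms] by (simp add: y_def u_def)
  ultimately have "pcompose (rev_dickson2 (n - 1) a) (y * u) = pcompose ([:a^2, -4:] ^ ((n - 1) div 2)) (y * u)"
    by simp
  moreover have "degree (y * u) > 0"
    by (simp add: y_def u_def degree_mult_eq)
  ultimately have "rev_dickson2 (n - 1) a = [:a^2, -4:] ^ ((n - 1) div 2)"
    using pcompose_eq_0[of "rev_dickson2 (n - 1) a - [:a^2, -4:] ^ ((n - 1) div 2)" "y * u"]
    by (simp add: pcompose_diff)
  then have "rev_dickson3 n a = smult a ([:a^2, -4:] ^ ((n - 1) div 2))"
    unfolding rev_dickson3_eq_smult_rev_dickson2[OF \<open>0 < n\<close>] by (rule arg_cong)
  then show ?thesis
    by (simp only: n_def)
qed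

lemma CHAR_eq_of_card_eq_prime_power:
  assumes "prime p" and "CARD('a::{finite,field}) = p ^ e"
  shows "CHAR('a) = p"
proof -
  have "prime CHAR('a)"
    by (intro prime_CHAR_semidom finite_imp_CHAR_pos) simp
  moreover have "CHAR('a) dvd p ^ e"
    using CHAR_dvd_CARD[where 'a = 'a] assms(2) by simp
  ultimately show ?thesis
    using assms(1) by (metis prime_dvd_power primes_dvd_imp_eq)
qed

lemma power_card_minus_one_eq_one:
  fixes x :: "'a::{finite,field}"
  assumes "x \<noteq> 0"
  shows "x ^ (CARD('a) - 1) = 1"
proof -
  let ?U = "UNIV - {0 :: 'a}"
  have "x ^ card ?U * (\<Prod>y\<in>?U. y) = (\<Prod>y\<in>?U. x * y)"
    by (simp add: prod.distrib)
  also have "\<dots> = (\<Prod>y\<in>?U. y)"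
    by (rule prod.reindex_bij_witness[of _ "\<lambda>y. y / x" "\<lambda>y. x * y"]) (use assms in auto)
  finally have "x ^ card ?U = 1"
    by simp
  then show ?thesis
    by (simp add: card_Diff_singleton)
qed

lemma card_roots_of_unity_le:
  assumes "0 < t"
  shows "card {z :: 'a::idom. z ^ t = 1} \<le> t"
proof -
  define P :: "'a poly" where "P = monom 1 t + [:-1:]"
  have "degree P = t"
    using assms by (simp add: P_def degree_add_eq_left degree_monom_eq)
  then have "P \<noteq> 0"
    using assms by auto
  moreover have "{z. z ^ t = 1} = {z. poly P z = 0}"
    by (simp add: P_def poly_monom)
  ultimately show ?thesis
    using card_poly_roots_bound[of P] \<open>degree P = t\<close> by simp
qed

lemma inj_power_imp_coprime:
  assumes "inj (\<lambda>x::'a::{finite,field}. x ^ m)"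
  shows "coprime m (CARD('a) - 1)"
proof (rule ccontr)
  assume "\<not> coprime m (CARD('a) - 1)"
  then obtain r where "prime r" "r dvd m" "r dvd CARD('a) - 1"
    by (metis coprime_iff_gcd_eq_1 dvd_gcdD1 dvd_gcdD2 prime_factor_nat)
  then obtain t s where t: "CARD('a) - 1 = r * t" and s: "m = r * s"
    by (auto elim!: dvdE)
  have "card {0 :: 'a, 1} \<le> CARD('a)"
    by (rule card_mono) auto
  then have "0 < t" "t < CARD('a) - 1"
    using t prime_gt_1_nat[OF \<open>prime r\<close>] by (auto intro!: Nat.gr0I)
  have "\<exists>z :: 'a. z \<noteq> 0 \<and> z ^ t \<noteq> 1"
  proof (rule ccontr)
    assume "\<not> ?thesis"
    then have "UNIV - {0} \<subseteq> {z :: 'a. z ^ t = 1}"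
      by auto
    then have "CARD('a) - 1 \<le> card {z :: 'a. z ^ t = 1}"
      by (metis card_Diff_singleton card_mono finite iso_tuple_UNIV_I)
    then show False
      using card_roots_of_unity_le[OF \<open>0 < t\<close>, where 'a = 'a] \<open>t < CARD('a) - 1\<close> by simp
  qed
  then obtain z :: 'a where "z \<noteq> 0" "z ^ t \<noteq> 1"
    by blast
  have "(z ^ t) ^ m = (z ^ (CARD('a) - 1)) ^ s"
    unfolding t s by (simp add: mult_ac flip: power_mult)
  also have "\<dots> = 1 ^ m"
    using power_card_minus_one_eq_one[OF \<open>z \<noteq> 0\<close>] by simp
  finally have "z ^ t = 1"
    using assms by (metis injD)
  with \<open>z ^ t \<noteq> 1\<close> show False ..
qed

lemma coprime_imp_bij_power:
  assumes "coprime m (CARD('a) - 1)" and "0 < m"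
  shows "bij (\<lambda>x::'a::{finite,field}. x ^ m)"
proof -
  obtain s t where st: "m * s = (CARD('a) - 1) * t + 1"
    using bezout_nat[of m "CARD('a) - 1"] assms by auto
  have "(x ^ m) ^ s = x" for x :: 'a
  proof (cases "x = 0")
    case True
    then show ?thesis
      using st by (simp flip: power_mult)
  next
    case False
    have "(x ^ m) ^ s = (x ^ (CARD('a) - 1)) ^ t * x"
      by (simp add: st power_add flip: power_mult)
    then show ?thesis
      using power_card_minus_one_eq_one[OF False] by simp
  qed
  then have "inj (\<lambda>x::'a. x ^ m)"
    by (rule inj_on_inverseI)
  then show ?thesis
    by (simp add: bij_def finite_UNIV_inj_surj)
qed

lemma bij_power_iff_coprime:
  assumes "0 < m"
  shows "bij (\<lambda>x::'a::{finite,field}. x ^ m) \<longleftrightarrow> coprime m (CARD('a) - 1)"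
  using assms bij_is_inj inj_power_imp_coprime coprime_imp_bij_power by blast

theorem theorem2p6:
  fixes p e k :: nat
  assumes "prime p" and "odd p" and "e \<ge> 1" and "1 \<le> k" and "k \<le> e"
    and "CARD('a) = p ^ e"
  shows "permutation_polynomial (rev_dickson3 (p ^ k) (1::'a::{finite,field}))
         \<longleftrightarrow> gcd ((p ^ k - 1) div 2) (p ^ e - 1) = 1"
proof -
  define m where "m = (p ^ k - 1) div 2"
  have char: "CHAR('a) = p"
    using CHAR_eq_of_card_eq_prime_power assms(1,6) by blast
  then have "poly (rev_dickson3 (p ^ k) (1::'a)) = (\<lambda>c. c ^ m) \<circ> (\<lambda>c. 1 - 4 * c)"
    using rev_dickson3_char_power[of k "1::'a"] assms(1,2) by (simp add: m_def fun_eq_iff mult.commute)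
  moreover have "bij (\<lambda>c::'a. 1 - 4 * c)"
  proof -
    have "(4::'a) \<noteq> 0"
      using two_neq_zero_odd_char[where 'a = 'a] char assms(1,2) by (metis mult_2_right mult_eq_0_iff numeral_Bit0)
    then show ?thesis
      by (intro bij_betw_byWitness[of _ "\<lambda>c. (1 - c) / 4"]) (auto simp: field_simps)
  qed
  moreover have "0 < m"
  proof -
    have "3 \<le> p"
      using assms(1,2) prime_ge_2_nat[of p] by (cases "p = 2") auto
    also have "p \<le> p ^ k"
      using assms(4) \<open>3 \<le> p\<close> by (simp add: self_le_power)
    finally show ?thesis
      by (simp add: m_def)
  qed
  ultimately show ?thesis
    unfolding permutation_polynomial_def
    by (simp add: bij_betw_comp_iff[symmetric] bij_power_iff_coprime coprime_iff_gcd_eq_1 assms(6) m_def)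
qed

end
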